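(* Let $p$ be a prime, $q=p^l$, $m\ge1$, $n=2m$. For any $0\leqslant r<n(q-1)$ and $I\subseteq M_r$, the code $\mathcal{C}_q(r,I,n)$ is affine-invariant, i.e. for every $a\in\mathbb{F}_{q^n}^*$ and $b\in\mathbb{F}_{q^n}$, if $(c_g)_{g\in\mathbb{F}_{q^n}}\in\mathcal{C}_q(r,I,n)$ then the vector $(c'_g)_{g\in\mathbb{F}_{q^n}}$ with $c'_{ag+b}=c_g$ for all $g$ also lies in $\mathcal{C}_q(r,I,n)$.
   Context: Let $N=q^n-1$ and $\alpha$ a primitive element of $\mathbb{F}_{q^n}$. Every integer $0\le u\le q^n-1$ is written $u=\sum_{i=0}^{n-1}u_iq^i$, $u_i\in\{0,\dots,q-1\}$; $\mathrm{wt}_q(u)=\sum u_i$, $O(u)=\sum_{i\text{ odd}}u_i$, $E(u)=\sum_{i\text{ even}}u_i$. For $-1\le r<n(q-1)$, $Z_r=\{\alpha^u\mid 0<u\le q^n-1,\ \mathrm{wt}_q(u)\le n(q-1)-r-1\}$. For $0\le r\le n(q-1)$ and integer $k\ge0$, $\Theta^{(r)}_k=\{\alpha^u\mid 0\le u\le q^n-1,\ \mathrm{wt}_q(u)=n(q-1)-r,\ |O(u)-E(u)|=k\}$. $M_r$ is the set of even (resp. odd) integers $k\in[0,m(q-1)]$ when $r$ is even (resp. odd). For $I\subseteq M_r$, $\overline I=M_r\setminus I$ and $Z_{r,I}=Z_r\cup\bigcup_{k\in\overline I}\Theta^{(r)}_k$. A cyclic code of length $N$ over $\mathbb{F}_q$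 with zero set $Z$ is $\{(c_0,\dots,c_{N-1})\in\mathbb{F}_q^N\mid \sum_{i}c_i\beta^i=0\ \forall\beta\in Z\}$; coordinate $i$ is labelled by the field element $\alpha^i$. $\mathcal{C}_q(r,I,n)^*$ is the cyclic code with zero set $Z_{r,I}$, and $\mathcal{C}_q(r,I,n)$ is its extended code: its coordinates are indexed by $\mathbb{F}_{q^n}$, with $c_{\alpha^i}=c_i$ and the extra coordinate labelled $0\in\mathbb{F}_{q^n}$ equal to $-\sum_i c_i$. *)

theory Defs
  imports "HOL-Computational_Algebra.Primes"
begin

definition qdigit :: "nat \<Rightarrow> nat \<Rightarrow> nat \<Rightarrow> nat" where
  "qdigit q i u = (u div q ^ i) mod q"

definition wtq :: "nat \<Rightarrow> nat \<Rightarrow> nat \<Rightarrow> nat" where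
  "wtq q n u = (\<Sum>i<n. qdigit q i u)"

definition Odig :: "nat \<Rightarrow> nat \<Rightarrow> nat \<Rightarrow> nat" where
  "Odig q n u = (\<Sum>i\<in>{i. i < n \<and> odd i}. qdigit q i u)"

definition Edig :: "nat \<Rightarrow> nat \<Rightarrow> nat \<Rightarrow> nat" where
  "Edig q n u = (\<Sum>i\<in>{i. i < n \<and> even i}. qdigit q i u)"

definition primitive_elem :: "'k::{finite,field} \<Rightarrow> bool" where
  "primitive_elem \<alpha> \<longleftrightarrow> \<alpha> \<noteq> 0 \<and> (\<forall>x. x \<noteq> 0 \<longrightarrow> (\<exists>i::nat. x = \<alpha> ^ i))"

definition Zset :: "nat \<Rightarrow> nat \<Rightarrow> 'k::{finite,field} \<Rightarrow> nat \<Rightarrow> 'k set" where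
  "Zset q n \<alpha> r = {\<alpha> ^ u | u. 0 < u \<and> u \<le> q ^ n - 1 \<and> wtq q n u \<le> n * (q - 1) - r - 1}"

definition Theta :: "nat \<Rightarrow> nat \<Rightarrow> 'k::{finite,field} \<Rightarrow> nat \<Rightarrow> nat \<Rightarrow> 'k set" where
  "Theta q n \<alpha> r k = {\<alpha> ^ u | u. u \<le> q ^ n - 1 \<and> wtq q n u = n * (q - 1) - r
      \<and> \<bar>int (Odig q n u) - int (Edig q n u)\<bar> = int k}"

definition Mset :: "nat \<Rightarrow> nat \<Rightarrow> nat \<Rightarrow> nat set" where
  "Mset q m r = {k. k \<le> m * (q - 1) \<and> (even k \<longleftrightarrow> even r)}"

definition ZrI :: "nat \<Rightarrow> nat \<Rightarrow> nat \<Rightarrow> 'k::{finite,field} \<Rightarrow> nat \<Rightarrow> nat set \<Rightarrow> 'k set" where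
  "ZrI q m n \<alpha> r I = Zset q n \<alpha> r \<union> (\<Union>k\<in>Mset q m r - I. Theta q n \<alpha> r k)"

text \<open>Cyclic code of length N over F_q (the subfield {x. x^q = x} of the field type),
  vectors represented as nat-indexed functions, coordinates i < N.\<close>
definition cyclic_code :: "nat \<Rightarrow> nat \<Rightarrow> 'k::{finite,field} set \<Rightarrow> (nat \<Rightarrow> 'k) set" where
  "cyclic_code q N Z = {v. (\<forall>i<N. v i ^ q = v i) \<and> (\<forall>\<beta>\<in>Z. (\<Sum>i<N. v i * \<beta> ^ i) = 0)}"

definition extended_code :: "nat \<Rightarrow> nat \<Rightarrow> 'k::{finite,field} \<Rightarrow> 'k set \<Rightarrow> ('k \<Rightarrow> 'k) set" where
  "extended_code q N \<alpha> Z = {c. (\<lambda>i. c (\<alpha> ^ i)) \<in> cyclic_code q N Z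
      \<and> c 0 = - (\<Sum>i<N. c (\<alpha> ^ i))}"

definition Ccode :: "nat \<Rightarrow> nat \<Rightarrow> nat \<Rightarrow> 'k::{finite,field} \<Rightarrow> nat \<Rightarrow> nat set \<Rightarrow> ('k \<Rightarrow> 'k) set" where
  "Ccode q m n \<alpha> r I = extended_code q (q ^ n - 1) \<alpha> (ZrI q m n \<alpha> r I)"

end

theory Submission
  imports Defs "HOL-Number_Theory.Residues"
begin

text \<open>
  A word of the extended code with zero set \<open>{\<alpha>^u | u \<in> U}\<close> is a word with values in
  \<open>\<bbbF>\<^sub>q\<close> whose power sums \<open>\<Sum>\<^sub>x c(x) x^u\<close> vanish for \<open>u = 0\<close> and all \<open>u \<in> U\<close>.
  Under \<open>x \<mapsto> ax + b\<close> the power sum for \<open>u\<close> becomes \<open>\<Sum>\<^sub>g c(g) (ag + b)^u\<close>, and since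
  \<open>x \<mapsto> x^q\<close> is additive, \<open>(g + b)^u\<close> only involves monomials \<open>g^k\<close> whose base-\<open>q\<close> digits are
  bounded by those of \<open>u\<close>. So affine invariance follows once \<open>U\<close> is closed under passing to
  such digitwise smaller exponents. For the zero set \<open>Z_{r,I}\<close> this holds because a digitwise
  smaller exponent \<open>k \<noteq> u\<close> has strictly smaller \<open>q\<close>-weight, hence \<open>\<alpha>^k \<in> Z\<^sub>r\<close>.
\<close>

definition qdigits_le :: "nat \<Rightarrow> nat \<Rightarrow> nat \<Rightarrow> bool" where
  "qdigits_le q k u \<longleftrightarrow> (\<forall>i. qdigit q i k \<le> qdigit q i u)"

lemma qdigit_0: "qdigit q 0 x = x mod q"
  by (simp add: qdigit_def)

lemma qdigit_Suc: "qdigit q (Suc i) x = qdigit q i (x div q)"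
  by (simp add: qdigit_def div_mult2_eq)

lemma qdigits_le_iff:
  "qdigits_le q k u \<longleftrightarrow> k mod q \<le> u mod q \<and> qdigits_le q (k div q) (u div q)"
  unfolding qdigits_le_def by (metis qdigit_0 qdigit_Suc not0_implies_Suc)

lemma qdigits_le_imp_le:
  assumes "qdigits_le q k u" and "1 < q"
  shows "k \<le> u"
  using assms(1)
proof (induction k arbitrary: u rule: less_induct)
  case (less k)
  show ?case
  proof (cases "k = 0")
    case False
    then have "k div q < k"
      using assms(2) by simp
    moreover have "qdigits_le q (k div q) (u div q)"
      using less.prems qdigits_le_iff by blast
    ultimately have "k div q \<le> u div q"
      using less.IH by blast
    moreover have "k mod q \<le> u mod q"
      using less.prems qdigits_le_iff by blast
    ultimately have "q * (k div q) + k mod q \<le> q * (u div q) + u mod q"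
      by (meson add_le_mono mult_le_mono2)
    then show ?thesis by simp
  qed simp
qed

lemma finite_qdigits_le: "1 < q \<Longrightarrow> finite {k. qdigits_le q k u}"
  by (rule finite_subset[of _ "{..u}"]) (auto dest: qdigits_le_imp_le)

lemma mod_power_eq_if_qdigits_eq:
  assumes "\<forall>i<n. qdigit q i x = qdigit q i y"
  shows "x mod q ^ n = y mod q ^ n"
  using assms
proof (induction n arbitrary: x y)
  case (Suc n)
  have "x div q mod q ^ n = y div q mod q ^ n"
    using Suc.prems by (intro Suc.IH) (metis Suc_mono qdigit_Suc)
  moreover have "x mod q = y mod q"
    using Suc.prems by (metis qdigit_0 zero_less_Suc)
  ultimately show ?case by (simp add: mod_mult2_eq)
qed simp

lemma wtq_less_if_qdigits_le:
  assumes "qdigits_le q k u" and "1 < q" and "k \<noteq> u" and "u < q ^ n"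
  shows "wtq q n k < wtq q n u"
proof -
  have "k < q ^ n"
    using qdigits_le_imp_le[OF assms(1,2)] assms(4) by simp
  then have "\<exists>i<n. qdigit q i k \<noteq> qdigit q i u"
    using mod_power_eq_if_qdigits_eq[of n q k u] assms(3,4) by auto
  then obtain i where "i < n" "qdigit q i k < qdigit q i u"
    using assms(1) unfolding qdigits_le_def by (meson le_neq_implies_less)
  then show ?thesis
    unfolding wtq_def using assms(1) qdigits_le_def by (intro sum_strict_mono_ex1) auto
qed

text \<open>A Lucas-type expansion: write \<open>u = d + q u'\<close> with \<open>d < q\<close>, so that
  \<open>(g + b)^u = (g + b)^d (g^q + b^q)^u'\<close>, and expand both factors.\<close>
lemma power_add_expansion_qdigits_le:
  fixes b :: "'a::comm_ring_1"
  assumes frobenius: "\<And>x y :: 'a. (x + y) ^ q = x ^ q + y ^ q" and "1 < q"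
  shows "\<exists>e. \<forall>g. (g + b) ^ u = (\<Sum>k | qdigits_le q k u. e k * g ^ k)"
proof (induction u arbitrary: b rule: less_induct)
  case (less u)
  show ?case
  proof (cases "u = 0")
    case True
    then have "{k. qdigits_le q k u} = {0}"
      using qdigits_le_imp_le[OF _ \<open>1 < q\<close>] by (auto simp: qdigits_le_def)
    then show ?thesis
      using True by (intro exI[of _ "\<lambda>_. 1"]) simp
  next
    case False
    define d u' where "d = u mod q" and "u' = u div q"
    have "u' < u"
      using False \<open>1 < q\<close> by (simp add: u'_def)
    then obtain e' where e': "\<And>g. (g + b ^ q) ^ u' = (\<Sum>k | qdigits_le q k u'. e' k * g ^ k)"
      using less by blast
    define S where "S = {..d} \<times> {k. qdigits_le q k u'}"
    define f where "f = (\<lambda>(i :: nat, k). i + q * k)"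
    define w where "w = (\<lambda>(i, k). of_nat (d choose i) * b ^ (d - i) * e' k :: 'a)"
    have expansion: "(g + b) ^ u = (\<Sum>x\<in>S. w x * g ^ f x)" for g
    proof -
      have "u = d + q * u'"
        by (simp add: d_def u'_def)
      then have "(g + b) ^ u = (g + b) ^ d * ((g + b) ^ q) ^ u'"
        by (simp add: power_add power_mult)
      also have "\<dots> = (\<Sum>i\<le>d. of_nat (d choose i) * g ^ i * b ^ (d - i))
          * (\<Sum>k | qdigits_le q k u'. e' k * (g ^ q) ^ k)"
        by (simp only: frobenius e' binomial_ring[of g b d])
      also have "\<dots> = (\<Sum>x\<in>S. w x * g ^ f x)"
        unfolding S_def sum_product
        by (subst sum.cartesian_product)
          (auto simp: w_def f_def power_add mult_ac simp flip: power_mult intro!: sum.cong)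
      finally show ?thesis .
    qed
    have "f ` S \<subseteq> {k. qdigits_le q k u}"
    proof clarify
      fix i k assume "(i, k) \<in> S"
      then have "i \<le> d" "qdigits_le q k u'"
        by (auto simp: S_def)
      moreover have "i < q"
        using \<open>i \<le> d\<close> \<open>1 < q\<close> unfolding d_def by (meson le_less_trans mod_less_divisor zero_less_one less_trans)
      ultimately show "qdigits_le q (f (i, k)) u"
        by (subst qdigits_le_iff) (simp add: f_def d_def u'_def)
    qed
    moreover have "finite S" "finite {k. qdigits_le q k u}"
      using finite_qdigits_le[OF \<open>1 < q\<close>] by (auto simp: S_def)
    ultimately have "(\<Sum>x\<in>S. w x * g ^ f x)
        = (\<Sum>y | qdigits_le q y u. (\<Sum>x | x \<in> S \<and> f x = y. w x) * g ^ y)" for g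
      by (subst sum.group[symmetric, of S _ f]) (auto simp: sum_distrib_right intro!: sum.cong)
    then show ?thesis
      using expansion by (intro exI[of _ "\<lambda>y. \<Sum>x | x \<in> S \<and> f x = y. w x"]) simp
  qed
qed

lemma nonzero_power_card_minus_one:
  fixes x :: "'k::{finite,field}"
  assumes "x \<noteq> 0"
  shows "x ^ (card (UNIV :: 'k set) - 1) = 1"
proof -
  have "(\<Prod>y\<in>UNIV - {0}. x * y) = (\<Prod>y\<in>UNIV - {0::'k}. y)"
    by (rule prod.reindex_bij_witness[of _ "\<lambda>y. y / x" "\<lambda>y. x * y"]) (use assms in auto)
  moreover have "(\<Prod>y\<in>UNIV - {0}. x * y) = x ^ card (UNIV - {0::'k}) * (\<Prod>y\<in>UNIV - {0::'k}. y)"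
    by (simp add: prod.distrib)
  moreover have "card (UNIV - {0::'k}) = card (UNIV :: 'k set) - 1"
    by (simp add: card_Diff_singleton)
  ultimately show ?thesis by simp
qed

lemma bij_betw_primitive_elem_powers:
  fixes \<alpha> :: "'k::{finite,field}"
  assumes "primitive_elem \<alpha>"
  shows "bij_betw (\<lambda>i. \<alpha> ^ i) {..<card (UNIV :: 'k set) - 1} (UNIV - {0})"
proof -
  let ?N = "card (UNIV :: 'k set) - 1"
  have "\<alpha> \<noteq> 0"
    using assms by (simp add: primitive_elem_def)
  then have "\<alpha> ^ ?N = 1"
    by (rule nonzero_power_card_minus_one)
  have "card {0, 1::'k} \<le> card (UNIV :: 'k set)"
    by (rule card_mono) auto
  then have "0 < ?N" by simp
  have image: "(\<lambda>i. \<alpha> ^ i) ` {..<?N} = UNIV - {0}"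
  proof
    show "(\<lambda>i. \<alpha> ^ i) ` {..<?N} \<subseteq> UNIV - {0}"
      using \<open>\<alpha> \<noteq> 0\<close> by auto
    show "UNIV - {0} \<subseteq> (\<lambda>i. \<alpha> ^ i) ` {..<?N}"
    proof
      fix x :: 'k assume "x \<in> UNIV - {0}"
      then obtain i where i: "x = \<alpha> ^ i"
        using assms by (auto simp: primitive_elem_def)
      have "\<alpha> ^ i = \<alpha> ^ (?N * (i div ?N) + i mod ?N)"
        by simp
      also have "\<dots> = \<alpha> ^ (i mod ?N)"
        by (simp only: power_add power_mult \<open>\<alpha> ^ ?N = 1\<close>) simp
      finally show "x \<in> (\<lambda>i. \<alpha> ^ i) ` {..<?N}"
        using i \<open>0 < ?N\<close> by auto
    qed
  qed
  moreover have "card ((\<lambda>i. \<alpha> ^ i) ` {..<?N}) = card {..<?N}"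
    using image by (simp add: card_Diff_singleton)
  ultimately show ?thesis
    unfolding bij_betw_def by (auto intro: eq_card_imp_inj_on)
qed

lemma sum_primitive_elem_powers:
  fixes \<alpha> :: "'k::{finite,field}"
  assumes "primitive_elem \<alpha>"
  shows "(\<Sum>i<card (UNIV :: 'k set) - 1. F (\<alpha> ^ i)) = (\<Sum>x\<in>UNIV - {0}. F x)"
  using sum.reindex_bij_betw[OF bij_betw_primitive_elem_powers[OF assms]] by simp

lemma sum_UNIV_affine_reindex:
  fixes a b :: "'k::{finite,field}"
  assumes "a \<noteq> 0"
  shows "(\<Sum>x\<in>UNIV. F x) = (\<Sum>g\<in>UNIV. F (a * g + b))"
  by (rule sum.reindex_bij_witness[of _ "\<lambda>g. a * g + b" "\<lambda>x. (x - b) / a"])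
    (use assms in \<open>auto simp: field_simps\<close>)

lemma CHAR_eq_if_card_eq_prime_power:
  assumes "prime p" and "card (UNIV :: 'k::{finite,field} set) = p ^ e"
  shows "CHAR('k) = p"
proof -
  have "prime CHAR('k)"
    by (intro prime_CHAR_semidom finite_imp_CHAR_pos) simp
  moreover have "CHAR('k) dvd p ^ e"
    using CHAR_dvd_CARD[where 'a='k] assms(2) by simp
  ultimately show ?thesis
    using assms(1) by (metis prime_dvd_power primes_dvd_imp_eq)
qed

lemma mem_extended_code_power_image_iff:
  fixes \<alpha> :: "'k::{finite,field}" and c :: "'k \<Rightarrow> 'k"
  assumes "prime CHAR('k)" and "q = CHAR('k) ^ l"
    and "primitive_elem \<alpha>" and "0 \<notin> U"
  shows "c \<in> extended_code q (card (UNIV :: 'k set) - 1) \<alpha> ((\<lambda>u. \<alpha> ^ u) ` U) \<longleftrightarrow>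
    (\<forall>x. c x ^ q = c x) \<and> (\<Sum>x\<in>UNIV. c x) = 0 \<and> (\<forall>u\<in>U. (\<Sum>x\<in>UNIV. c x * x ^ u) = 0)"
    (is "_ \<longleftrightarrow> ?values \<and> ?sum \<and> ?power_sums")
proof -
  let ?N = "card (UNIV :: 'k set) - 1"
  have split_zero: "(\<Sum>x\<in>UNIV. F x) = F 0 + (\<Sum>x\<in>UNIV - {0}. F x)" for F :: "'k \<Rightarrow> 'k"
    by (simp add: sum.remove)
  have power_sum: "(\<Sum>i<?N. c (\<alpha> ^ i) * (\<alpha> ^ u) ^ i) = (\<Sum>x\<in>UNIV. c x * x ^ u)"
    if "u \<in> U" for u
  proof -
    have "(\<Sum>i<?N. c (\<alpha> ^ i) * (\<alpha> ^ u) ^ i) = (\<Sum>i<?N. c (\<alpha> ^ i) * (\<alpha> ^ i) ^ u)"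
      by (simp add: mult.commute flip: power_mult)
    also have "\<dots> = (\<Sum>x\<in>UNIV - {0}. c x * x ^ u)"
      by (rule sum_primitive_elem_powers[OF assms(3)])
    also have "\<dots> = (\<Sum>x\<in>UNIV. c x * x ^ u)"
      using split_zero[of "\<lambda>x. c x * x ^ u"] that assms(4) by (cases u) auto
    finally show ?thesis .
  qed
  have unfolded: "c \<in> extended_code q ?N \<alpha> ((\<lambda>u. \<alpha> ^ u) ` U) \<longleftrightarrow>
      (\<forall>i<?N. c (\<alpha> ^ i) ^ q = c (\<alpha> ^ i)) \<and>
      (\<forall>u\<in>U. (\<Sum>i<?N. c (\<alpha> ^ i) * (\<alpha> ^ u) ^ i) = 0) \<and> c 0 = - (\<Sum>i<?N. c (\<alpha> ^ i))"
    unfolding extended_code_def cyclic_code_def by simp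
  have zero_coord: "c 0 = - (\<Sum>i<?N. c (\<alpha> ^ i)) \<longleftrightarrow> ?sum"
    using split_zero[of c] sum_primitive_elem_powers[OF assms(3), of c]
    by (simp add: eq_neg_iff_add_eq_0)
  have nonzero_values: "(\<forall>i<?N. c (\<alpha> ^ i) ^ q = c (\<alpha> ^ i)) \<longleftrightarrow> (\<forall>x\<in>UNIV - {0}. c x ^ q = c x)"
  proof -
    have image: "(\<lambda>i. \<alpha> ^ i) ` {..<?N} = UNIV - {0}"
      using bij_betw_imp_surj_on[OF bij_betw_primitive_elem_powers[OF assms(3)]] .
    have "(\<forall>i<?N. c (\<alpha> ^ i) ^ q = c (\<alpha> ^ i)) \<longleftrightarrow>
        (\<forall>x\<in>(\<lambda>i. \<alpha> ^ i) ` {..<?N}. c x ^ q = c x)"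
      by auto
    then show ?thesis
      by (simp only: image)
  qed
  have "c 0 ^ q = c 0" if ?sum and "\<forall>x\<in>UNIV - {0}. c x ^ q = c x"
  proof -
    have "0 < q"
      using assms(1,2) by (simp add: prime_gt_0_nat)
    then have "(c 0 + (\<Sum>x\<in>UNIV - {0}. c x)) ^ q = 0"
      using \<open>?sum\<close> split_zero[of c] by simp
    then have "c 0 ^ q + (\<Sum>x\<in>UNIV - {0}. c x ^ q) = 0"
      using assms(1,2) by (simp add: freshmans_dream' freshmans_dream_sum')
    moreover have "(\<Sum>x\<in>UNIV - {0}. c x ^ q) = (\<Sum>x\<in>UNIV - {0}. c x)"
      using that(2) by simp
    ultimately show ?thesis
      using \<open>?sum\<close> split_zero[of c] by (metis add_right_cancel)
  qed
  then have "?values \<longleftrightarrow> (\<forall>x\<in>UNIV - {0}. c x ^ q = c x)" if ?sum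
    using that by blast
  moreover have "(\<forall>u\<in>U. (\<Sum>i<?N. c (\<alpha> ^ i) * (\<alpha> ^ u) ^ i) = 0) \<longleftrightarrow> ?power_sums"
    using power_sum by auto
  ultimately show ?thesis
    unfolding unfolded zero_coord nonzero_values by argo
qed

lemma affine_image_mem_extended_code:
  fixes \<alpha> a b :: "'k::{finite,field}" and c :: "'k \<Rightarrow> 'k"
  assumes "prime CHAR('k)" and "q = CHAR('k) ^ l" and "0 < l"
    and "primitive_elem \<alpha>" and "0 \<notin> U"
    and down_closed: "\<And>u k. u \<in> U \<Longrightarrow> qdigits_le q k u \<Longrightarrow> 0 < k \<Longrightarrow> k \<in> U"
    and "a \<noteq> 0"
    and "c \<in> extended_code q (card (UNIV :: 'k set) - 1) \<alpha> ((\<lambda>u. \<alpha> ^ u) ` U)"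
  shows "(\<lambda>h. c ((h - b) / a)) \<in> extended_code q (card (UNIV :: 'k set) - 1) \<alpha> ((\<lambda>u. \<alpha> ^ u) ` U)"
proof -
  let ?c' = "\<lambda>h. c ((h - b) / a)"
  note code_iff = mem_extended_code_power_image_iff[OF assms(1,2,4,5)]
  have "1 < q"
    using assms(1-3) prime_gt_1_nat one_less_power by metis
  have frobenius: "(x + y) ^ q = x ^ q + y ^ q" for x y :: 'k
    using freshmans_dream' assms(1,2) by blast
  have c: "\<forall>x. c x ^ q = c x" "(\<Sum>x\<in>UNIV. c x) = 0" "\<forall>u\<in>U. (\<Sum>x\<in>UNIV. c x * x ^ u) = 0"
    using assms(8) code_iff by auto
  have reindex: "(\<Sum>x\<in>UNIV. F (?c' x) x) = (\<Sum>g\<in>UNIV. F (c g) (a * g + b))" for F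
    using sum_UNIV_affine_reindex[OF assms(7), of "\<lambda>x. F (?c' x) x" b] assms(7) by simp
  have "(\<Sum>x\<in>UNIV. ?c' x * x ^ u) = 0" if "u \<in> U" for u
  proof -
    obtain e where e: "\<And>g. (g + b / a) ^ u = (\<Sum>k | qdigits_le q k u. e k * g ^ k)"
      using power_add_expansion_qdigits_le[OF frobenius \<open>1 < q\<close>] by blast
    have vanish: "(\<Sum>g\<in>UNIV. c g * g ^ k) = 0" if "qdigits_le q k u" for k
      using c(2,3) down_closed[OF \<open>u \<in> U\<close> that] by (cases "k = 0") auto
    have "(\<Sum>x\<in>UNIV. ?c' x * x ^ u) = (\<Sum>g\<in>UNIV. c g * (a * g + b) ^ u)"
      by (rule reindex)
    also have "\<dots> = (\<Sum>g\<in>UNIV. c g * (a ^ u * (\<Sum>k | qdigits_le q k u. e k * g ^ k)))"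
    proof (rule sum.cong[OF refl])
      fix g
      have "a * g + b = a * (g + b / a)"
        using assms(7) by (simp add: field_simps)
      then show "c g * (a * g + b) ^ u = c g * (a ^ u * (\<Sum>k | qdigits_le q k u. e k * g ^ k))"
        by (simp add: e power_mult_distrib)
    qed
    also have "\<dots> = a ^ u * (\<Sum>k | qdigits_le q k u. e k * (\<Sum>g\<in>UNIV. c g * g ^ k))"
      by (simp add: sum_distrib_left mult_ac sum.swap[of _ UNIV])
    also have "\<dots> = 0"
      using vanish by simp
    finally show ?thesis .
  qed
  then show ?thesis
    using code_iff c reindex[of "\<lambda>v _. v"] by auto
qed

definition ZrI_exponents :: "nat \<Rightarrow> nat \<Rightarrow> nat \<Rightarrow> nat \<Rightarrow> nat set \<Rightarrow> nat set" where
  "ZrI_exponents q m n r I = {u. 0 < u \<and> u < q ^ n \<and>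
     (wtq q n u < n * (q - 1) - r \<or>
      wtq q n u = n * (q - 1) - r \<and>
      (\<exists>k\<in>Mset q m r - I. \<bar>int (Odig q n u) - int (Edig q n u)\<bar> = int k))}"

lemma ZrI_eq_image_ZrI_exponents:
  assumes "0 < q" and "r < n * (q - 1)"
  shows "ZrI q m n \<alpha> r I = (\<lambda>u. \<alpha> ^ u) ` ZrI_exponents q m n r I"
proof -
  let ?w = "n * (q - 1) - r"
  let ?dev = "\<lambda>u. \<bar>int (Odig q n u) - int (Edig q n u)\<bar>"
  have "0 < q ^ n"
    using assms(1) by simp
  then have bound: "u \<le> q ^ n - 1 \<longleftrightarrow> u < q ^ n" for u
    by arith
  have "wtq q n 0 = 0"
    by (simp add: wtq_def qdigit_def)
  then have positive: "wtq q n u = ?w \<Longrightarrow> 0 < u" for u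
    using assms(2) by (cases u) auto
  have Zset: "Zset q n \<alpha> r = (\<lambda>u. \<alpha> ^ u) ` {u. 0 < u \<and> u < q ^ n \<and> wtq q n u < ?w}"
  proof -
    have "x \<le> ?w - 1 \<longleftrightarrow> x < ?w" for x
      using assms(2) by arith
    then show ?thesis
      unfolding Zset_def setcompr_eq_image by (simp only: bound)
  qed
  have Theta: "Theta q n \<alpha> r k =
      (\<lambda>u. \<alpha> ^ u) ` {u. 0 < u \<and> u < q ^ n \<and> wtq q n u = ?w \<and> ?dev u = int k}" for k
    unfolding Theta_def setcompr_eq_image using bound positive
    by (intro arg_cong[where f = "image _"]) blast
  have exponents: "ZrI_exponents q m n r I = {u. 0 < u \<and> u < q ^ n \<and> wtq q n u < ?w}
      \<union> (\<Union>k\<in>Mset q m r - I. {u. 0 < u \<and> u < q ^ n \<and> wtq q n u = ?w \<and> ?dev u = int k})"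
    unfolding ZrI_exponents_def by blast
  show ?thesis
    unfolding ZrI_def Zset Theta exponents image_Un image_UN ..
qed

lemma ZrI_exponents_down_closed:
  assumes "1 < q" and "u \<in> ZrI_exponents q m n r I" and "qdigits_le q k u" and "0 < k"
  shows "k \<in> ZrI_exponents q m n r I"
proof (cases "k = u")
  case False
  have "k \<le> u"
    using qdigits_le_imp_le[OF assms(3,1)] .
  moreover have "wtq q n k < wtq q n u"
    using wtq_less_if_qdigits_le[OF assms(3,1) False] assms(2) by (simp add: ZrI_exponents_def)
  ultimately show ?thesis
    using assms(2,4) unfolding ZrI_exponents_def by auto
qed (use assms(2) in simp)

theorem theorem3p11:
  fixes p l q m n r :: nat and I :: "nat set" and \<alpha> :: "'k::{finite,field}"
    and a b :: 'k and c :: "'k \<Rightarrow> 'k"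
  assumes "prime p" and "l \<ge> 1" and "q = p ^ l" and "m \<ge> 1" and "n = 2 * m"
    and "card (UNIV :: 'k set) = q ^ n"
    and "primitive_elem \<alpha>"
    and "r < n * (q - 1)"
    and "I \<subseteq> Mset q m r"
    and "a \<noteq> 0"
    and "c \<in> Ccode q m n \<alpha> r I"
  shows "(\<lambda>h. c ((h - b) / a)) \<in> Ccode q m n \<alpha> r I"
proof -
  have "CHAR('k) = p"
    using CHAR_eq_if_card_eq_prime_power[where 'k = 'k, OF assms(1), of "l * n"] assms(3,6)
    by (simp add: power_mult)
  then have char: "prime CHAR('k)" "q = CHAR('k) ^ l"
    using assms(1,3) by simp_all
  have "1 < q"
    using assms(1-3) prime_gt_1_nat one_less_power by (metis less_le_trans zero_less_one)
  have zero_set: "ZrI q m n \<alpha> r I = (\<lambda>u. \<alpha> ^ u) ` ZrI_exponents q m n r I"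
    by (rule ZrI_eq_image_ZrI_exponents) (use \<open>1 < q\<close> assms(8) in auto)
  have "0 \<notin> ZrI_exponents q m n r I"
    by (simp add: ZrI_exponents_def)
  from affine_image_mem_extended_code[OF char _ assms(7) this
      ZrI_exponents_down_closed[OF \<open>1 < q\<close>] assms(10)]
  show ?thesis
    using assms(2,6,11) unfolding Ccode_def zero_set by simp
qed

end
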